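(* Let $G$ be a graph and $m \geq 1$ an integer. If there exists an optimal packing coloring of $FSSD_m(G)$ which assigns color $1$ to all subdivided vertices, then $\chi_\rho(FSSD_m(G)) = \chi_\rho(FSSD_{m+1}(G))$.
   Context: All graphs are finite and simple. For a positive integer $i$, an $i$-packing in a graph is a set of vertices any two distinct members of which are at distance greater than $i$. A $k$-packing coloring of a graph $H$ is a map $c:V(H)\to\{1,\dots,k\}$ such that $c(u)=c(v)=i$ with $u \neq v$ implies $d_H(u,v)>i$; the packing chromatic number $\chi_\rho(H)$ is the least such $k$, and a $\chi_\rho(H)$-packing coloring is called optimal. For a positive integer $m$, $FSSD_m(G)$ is obtained from $G$ by replacing each edge $uv$ of $G$ by a copy of $K_{2,m}$: the edge $uv$ is deleted and $m$ new vertices are added, each adjacent to exactly $u$ and $v$. These new vertices are called the subdivided vertices of $FSSD_m(G)$. *)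

theory Defs
  imports Main "HOL-Library.Extended_Nat"
begin

type_synonym 'v graph = "'v set \<times> 'v set set"

definition verts :: "'v graph \<Rightarrow> 'v set" where "verts G = fst G"
definition edges :: "'v graph \<Rightarrow> 'v set set" where "edges G = snd G"

definition simple_graph :: "'v graph \<Rightarrow> bool" where
  "simple_graph G \<longleftrightarrow> finite (verts G) \<and>
     (\<forall>e\<in>edges G. \<exists>u v. e = {u, v} \<and> u \<noteq> v \<and> u \<in> verts G \<and> v \<in> verts G)"

definition adj :: "'v graph \<Rightarrow> 'v \<Rightarrow> 'v \<Rightarrow> bool" where
  "adj G u v \<longleftrightarrow> {u, v} \<in> edges G"

inductive walk_len :: "'v graph \<Rightarrow> nat \<Rightarrow> 'v \<Rightarrow> 'v \<Rightarrow> bool" for G where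
  walk0: "u \<in> verts G \<Longrightarrow> walk_len G 0 u u"
| walkS: "adj G u w \<Longrightarrow> walk_len G n w v \<Longrightarrow> walk_len G (Suc n) u v"

text \<open>Distance (infinite if no path).\<close>
definition gdist :: "'v graph \<Rightarrow> 'v \<Rightarrow> 'v \<Rightarrow> enat" where
  "gdist G u v = Inf (enat ` {n. walk_len G n u v})"

definition packing_coloring :: "'v graph \<Rightarrow> nat \<Rightarrow> ('v \<Rightarrow> nat) \<Rightarrow> bool" where
  "packing_coloring G k c \<longleftrightarrow>
     (\<forall>v\<in>verts G. c v \<in> {1..k}) \<and>
     (\<forall>u\<in>verts G. \<forall>v\<in>verts G. u \<noteq> v \<and> c u = c v \<longrightarrow> gdist G u v > enat (c u))"

definition packing_chromatic :: "'v graph \<Rightarrow> nat" where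
  "packing_chromatic G = (LEAST k. \<exists>c. packing_coloring G k c)"

definition optimal_packing_coloring :: "'v graph \<Rightarrow> ('v \<Rightarrow> nat) \<Rightarrow> bool" where
  "optimal_packing_coloring G c \<longleftrightarrow> packing_coloring G (packing_chromatic G) c"

text \<open>FSSD_m(G): original vertex u is Inl u; the i-th (i < m) subdivided vertex
on edge e is Inr (e, i), adjacent exactly to the two ends of e.\<close>

definition subdivided :: "nat \<Rightarrow> 'v graph \<Rightarrow> ('v + 'v set \<times> nat) set" where
  "subdivided m G = {Inr (e, i) | e i. e \<in> edges G \<and> i < m}"

definition FSSD :: "nat \<Rightarrow> 'v graph \<Rightarrow> ('v + 'v set \<times> nat) graph" where
  "FSSD m G = (Inl ` verts G \<union> subdivided m G,
               {{Inl u, Inr (e, i)} | u e i. e \<in> edges G \<and> u \<in> e \<and> i < m})"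

end

theory Submission
  imports Defs
begin

text \<open>Folding the last copy of each edge's subdivided vertices onto the first is a
homomorphism from FSSD_(m+1)(G) onto FSSD_m(G). Homomorphisms do not increase distances,
so pulling back the given optimal coloring of FSSD_m(G) along the fold yields a packing
coloring of FSSD_(m+1)(G): the only pairs identified by the fold are two distinct
subdivided vertices, which are colored 1 and are non-adjacent. Conversely FSSD_m(G) is a
subgraph of FSSD_(m+1)(G), so pulling back along the inclusion gives the other
inequality.\<close>

lemma walk_len_hom:
  assumes "walk_len G1 n u v"
    and "\<And>x. x \<in> verts G1 \<Longrightarrow> f x \<in> verts G2"
    and "\<And>x y. adj G1 x y \<Longrightarrow> adj G2 (f x) (f y)"
  shows "walk_len G2 n (f u) (f v)"
  using assms(1)
proof (induction rule: walk_len.induct)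
  case (walk0 u)
  then show ?case using assms(2) by (simp add: walk_len.walk0)
next
  case (walkS u w n v)
  then show ?case using assms(3) by (meson walk_len.walkS)
qed

lemma gdist_hom:
  assumes "\<And>x. x \<in> verts G1 \<Longrightarrow> f x \<in> verts G2"
    and "\<And>x y. adj G1 x y \<Longrightarrow> adj G2 (f x) (f y)"
  shows "gdist G2 (f u) (f v) \<le> gdist G1 u v"
proof -
  have "enat ` {n. walk_len G1 n u v} \<subseteq> enat ` {n. walk_len G2 n (f u) (f v)}"
    using walk_len_hom[of G1 _ u v f G2, OF _ assms] by blast
  then show ?thesis unfolding gdist_def by (rule Inf_superset_mono)
qed

lemma walk_len_1_adj:
  assumes "walk_len G (Suc 0) u v"
  shows "adj G u v"
  using assms by (auto elim: walk_len.cases)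

lemma gdist_gt_1:
  assumes "u \<noteq> v" and "\<not> adj G u v"
  shows "enat 1 < gdist G u v"
proof -
  have "enat 2 \<le> enat n" if "walk_len G n u v" for n
  proof -
    have "n \<noteq> 0" using that assms(1) by (auto elim: walk_len.cases)
    moreover have "n \<noteq> 1" using that assms(2) walk_len_1_adj by fastforce
    ultimately show ?thesis by simp
  qed
  then have "enat 2 \<le> gdist G u v"
    unfolding gdist_def by (auto intro: Inf_greatest)
  moreover have "enat 1 < enat 2" by simp
  ultimately show ?thesis by (meson less_le_trans)
qed

lemma packing_coloring_pullback:
  assumes "packing_coloring G2 k c"
    and verts: "\<And>x. x \<in> verts G1 \<Longrightarrow> f x \<in> verts G2"
    and adj: "\<And>x y. adj G1 x y \<Longrightarrow> adj G2 (f x) (f y)"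
    and collapse: "\<And>u v. \<lbrakk>u \<in> verts G1; v \<in> verts G1; u \<noteq> v; f u = f v\<rbrakk>
                      \<Longrightarrow> enat (c (f u)) < gdist G1 u v"
  shows "packing_coloring G1 k (c \<circ> f)"
  unfolding packing_coloring_def
proof (intro conjI ballI impI)
  fix v assume "v \<in> verts G1"
  then show "(c \<circ> f) v \<in> {1..k}" using assms(1) verts unfolding packing_coloring_def by auto
next
  fix u v assume u: "u \<in> verts G1" and v: "v \<in> verts G1" and uv: "u \<noteq> v \<and> (c \<circ> f) u = (c \<circ> f) v"
  show "enat ((c \<circ> f) u) < gdist G1 u v"
  proof (cases "f u = f v")
    case True
    then show ?thesis using collapse u v uv by simp
  next
    case False
    then have "enat (c (f u)) < gdist G2 (f u) (f v)"
      using assms(1) verts[OF u] verts[OF v] uv unfolding packing_coloring_def by auto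
    also have "\<dots> \<le> gdist G1 u v" using verts adj by (rule gdist_hom)
    finally show ?thesis by simp
  qed
qed

lemma packing_chromatic_le:
  "packing_coloring G k c \<Longrightarrow> packing_chromatic G \<le> k"
  unfolding packing_chromatic_def by (intro Least_le) blast

lemma optimal_packing_coloring_exists:
  "packing_coloring G k c \<Longrightarrow> \<exists>d. optimal_packing_coloring G d"
  unfolding optimal_packing_coloring_def packing_chromatic_def
  by (rule LeastI_ex) blast

lemma verts_FSSD: "verts (FSSD m G) = Inl ` verts G \<union> subdivided m G"
  unfolding FSSD_def verts_def by simp

lemma adj_FSSD:
  "adj (FSSD m G) x y \<longleftrightarrow> (\<exists>u e i. e \<in> edges G \<and> u \<in> e \<and> i < m \<and>
     ((x = Inl u \<and> y = Inr (e, i)) \<or> (y = Inl u \<and> x = Inr (e, i))))"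
  unfolding adj_def FSSD_def edges_def[of "(_, _)"]
  by (auto simp: doubleton_eq_iff)

lemma verts_FSSD_mono: "m \<le> n \<Longrightarrow> verts (FSSD m G) \<subseteq> verts (FSSD n G)"
  unfolding verts_FSSD subdivided_def by auto

lemma adj_FSSD_mono: "m \<le> n \<Longrightarrow> adj (FSSD m G) x y \<Longrightarrow> adj (FSSD n G) x y"
  unfolding adj_FSSD by (blast intro: order_less_le_trans)

definition fold_last :: "nat \<Rightarrow> 'v + 'v set \<times> nat \<Rightarrow> 'v + 'v set \<times> nat" where
  "fold_last m x = (case x of Inl u \<Rightarrow> Inl u | Inr (e, i) \<Rightarrow> Inr (e, if i = m then 0 else i))"

lemma fold_last_verts:
  "0 < m \<Longrightarrow> x \<in> verts (FSSD (Suc m) G) \<Longrightarrow> fold_last m x \<in> verts (FSSD m G)"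
  unfolding verts_FSSD subdivided_def fold_last_def by auto

lemma fold_last_subdivided:
  "0 < m \<Longrightarrow> x \<in> subdivided (Suc m) G \<Longrightarrow> fold_last m x \<in> subdivided m G"
  unfolding subdivided_def fold_last_def by auto

lemma fold_last_adj:
  assumes "0 < m" and "adj (FSSD (Suc m) G) x y"
  shows "adj (FSSD m G) (fold_last m x) (fold_last m y)"
proof -
  have "(if i = m then 0 else i) < m" if "i < Suc m" for i
    using assms(1) that by auto
  then show ?thesis using assms(2) unfolding adj_FSSD fold_last_def by fastforce
qed

lemma fold_last_collapse:
  assumes "x \<in> verts (FSSD (Suc m) G)" "y \<in> verts (FSSD (Suc m) G)"
    and "x \<noteq> y" "fold_last m x = fold_last m y"
  shows "x \<in> subdivided (Suc m) G" "y \<in> subdivided (Suc m) G"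
  using assms unfolding verts_FSSD subdivided_def fold_last_def by auto

lemma subdivided_not_adj:
  "x \<in> subdivided m G \<Longrightarrow> y \<in> subdivided m G \<Longrightarrow> \<not> adj (FSSD m G) x y"
  unfolding subdivided_def adj_FSSD by auto

theorem proposition4:
  fixes G :: "'v graph" and m :: nat
  assumes "simple_graph G"
    and "m \<ge> 1"
    and "\<exists>c. optimal_packing_coloring (FSSD m G) c \<and> (\<forall>x\<in>subdivided m G. c x = 1)"
  shows "packing_chromatic (FSSD m G) = packing_chromatic (FSSD (Suc m) G)"
proof -
  let ?H = "FSSD m G" and ?H' = "FSSD (Suc m) G"
  obtain c where c: "packing_coloring ?H (packing_chromatic ?H) c"
    and c1: "\<forall>x\<in>subdivided m G. c x = 1"
    using assms(3) unfolding optimal_packing_coloring_def by blast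
  have m: "0 < m" using assms(2) by simp
  have "packing_coloring ?H' (packing_chromatic ?H) (c \<circ> fold_last m)"
  proof (rule packing_coloring_pullback[OF c fold_last_verts[OF m] fold_last_adj[OF m]])
    fix x y assume "x \<in> verts ?H'" "y \<in> verts ?H'" "x \<noteq> y" "fold_last m x = fold_last m y"
    with fold_last_collapse[OF this] show "enat (c (fold_last m x)) < gdist ?H' x y"
      using c1 fold_last_subdivided[OF m] gdist_gt_1 subdivided_not_adj by (metis enat_1)
  qed
  then have le: "packing_chromatic ?H' \<le> packing_chromatic ?H"
    and "\<exists>d. optimal_packing_coloring ?H' d"
    by (rule packing_chromatic_le, rule optimal_packing_coloring_exists)
  then obtain d where "packing_coloring ?H' (packing_chromatic ?H') d"
    unfolding optimal_packing_coloring_def by blast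
  then have "packing_coloring ?H (packing_chromatic ?H') (d \<circ> id)"
    by (rule packing_coloring_pullback)
      (use verts_FSSD_mono[of m "Suc m" G] adj_FSSD_mono[of m "Suc m" G] in auto)
  then show ?thesis using le packing_chromatic_le by fastforce
qed

end
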